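(* Let $p>1$, $N\ge2m-1$, and let $A\in\mathbb R^{m\times N}$ be a fixed matrix all of whose $m\times m$ submatrices are invertible. Then for almost all $y\in\mathbb R^m$, the unique optimal solution $x^*$ of $\min_{x\in\mathbb R^N}\|x\|_p$ subject to $Ax=y$ satisfies $|\mathrm{supp}(x^* )|=N$.
   Context: $\|x\|_p:=(\sum_i|x_i|^p)^{1/p}$; $\mathrm{supp}(x)=\{i:x_i\ne0\}$. "For almost all" means outside a set of Lebesgue measure zero. *)

theory Defs
  imports "HOL-Analysis.Analysis"
begin

definition pnorm :: "real \<Rightarrow> real ^ 'n::finite \<Rightarrow> real" where
  "pnorm p x = (\<Sum>i\<in>UNIV. \<bar>x $ i\<bar> powr p) powr (1 / p)"

definition supp :: "real ^ 'n::finite \<Rightarrow> 'n set" where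
  "supp x = {i. x $ i \<noteq> 0}"

definition pnorm_min :: "real \<Rightarrow> real ^ 'n::finite ^ 'm::finite \<Rightarrow> real ^ 'm \<Rightarrow> real ^ 'n \<Rightarrow> bool" where
  "pnorm_min p A y x \<longleftrightarrow> A *v x = y \<and> (\<forall>z. A *v z = y \<longrightarrow> pnorm p x \<le> pnorm p z)"

end

theory Submission
  imports Defs
begin

text \<open>
  The function \<open>x \<mapsto> \<Sum>i. |x i| ^ p\<close> is coercive and strictly convex, so on the affine space
  \<open>{x. A x = y}\<close> (nonempty, as \<open>A\<close> has an invertible \<open>m \<times> m\<close> submatrix) it has a unique
  minimiser \<open>x\<close>. Its gradient \<open>(sgn (x i) * |x i| ^ (p - 1))\<^sub>i\<close> is orthogonal to \<open>ker A\<close>, hence of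
  the form \<open>A\<^sup>T \<lambda>\<close>; inverting, \<open>x i = \<phi> (a i \<bullet> \<lambda>)\<close> with \<open>\<phi> s = sgn s * |s| ^ (1 / (p - 1))\<close> and
  \<open>a i\<close> the columns of \<open>A\<close>, so \<open>y = (\<Sum>i. \<phi> (a i \<bullet> \<lambda>) a i)\<close>. If \<open>x j = 0\<close> then \<open>a j \<bullet> \<lambda> = 0\<close>,
  so \<open>y\<close> lies in the image of finitely many hyperplanes of \<open>\<real>\<^sup>m\<close> under maps into \<open>\<real>\<^sup>m\<close> that are
  differentiable there once the vanishing terms are dropped. Such an image is Lebesgue-null.
\<close>

definition signed_powr :: "real \<Rightarrow> real \<Rightarrow> real" where
  "signed_powr r t = sgn t * \<bar>t\<bar> powr r"

lemma signed_powr_eq_0_iff [simp]: "signed_powr r t = 0 \<longleftrightarrow> t = 0"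
  by (auto simp: signed_powr_def sgn_if)

lemma signed_powr_inverse:
  assumes "r > 0"
  shows "signed_powr (1 / r) (signed_powr r t) = t"
  using assms by (auto simp: signed_powr_def sgn_if abs_mult powr_powr)

lemma signed_powr_strict_mono:
  assumes "r > 0" "s < t"
  shows "signed_powr r s < signed_powr r t"
proof -
  consider "0 \<le> s" | "s < 0" "0 < t" | "t \<le> 0" using assms by linarith
  then show ?thesis
  proof cases
    case 1
    then show ?thesis using assms powr_less_mono2[of r s t] by (auto simp: signed_powr_def sgn_if)
  next
    case 2
    have "(- s) powr r > 0" "t powr r > 0" using 2 by auto
    then have "- ((- s) powr r) < t powr r" by linarith
    then show ?thesis using 2 by (simp add: signed_powr_def)
  next
    case 3
    then show ?thesis using assms powr_less_mono2[of r "-t" "-s"] by (auto simp: signed_powr_def sgn_if)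
  qed
qed

lemma has_real_derivative_at_nonzero_by_sign:
  fixes f :: "real \<Rightarrow> real"
  assumes "t \<noteq> 0"
    and "t > 0 \<Longrightarrow> (g has_real_derivative D) (at t)" "\<And>s. s > 0 \<Longrightarrow> f s = g s"
    and "t < 0 \<Longrightarrow> (h has_real_derivative D) (at t)" "\<And>s. s < 0 \<Longrightarrow> f s = h s"
  shows "(f has_real_derivative D) (at t)"
proof (cases "t > 0")
  case True
  show ?thesis
    by (rule has_field_derivative_transform_within_open[where S="{0<..}", OF assms(2)[OF True]])
       (use True assms(3) in auto)
next
  case False
  then have "t < 0" using assms(1) by simp
  show ?thesis
    by (rule has_field_derivative_transform_within_open[where S="{..<0}", OF assms(4)[OF \<open>t < 0\<close>]])
       (use \<open>t < 0\<close> assms(5) in auto)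
qed

lemma has_real_derivative_signed_powr:
  assumes "t \<noteq> 0"
  shows "(signed_powr r has_real_derivative r * \<bar>t\<bar> powr (r - 1)) (at t)"
  by (rule has_real_derivative_at_nonzero_by_sign[OF assms, where g="\<lambda>s. s powr r" and h="\<lambda>s. - ((- s) powr r)"])
     (auto simp: signed_powr_def intro!: derivative_eq_intros)

lemma has_real_derivative_abs_powr_nonzero:
  assumes "t \<noteq> 0"
  shows "((\<lambda>s. \<bar>s\<bar> powr r) has_real_derivative r * signed_powr (r - 1) t) (at t)"
  by (rule has_real_derivative_at_nonzero_by_sign[OF assms, where g="\<lambda>s. s powr r" and h="\<lambda>s. (- s) powr r"])
     (auto simp: signed_powr_def intro!: derivative_eq_intros)

lemma has_real_derivative_abs_powr:
  assumes "p > 1"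
  shows "((\<lambda>s. \<bar>s\<bar> powr p) has_real_derivative p * signed_powr (p - 1) t) (at t)"
proof (cases "t = 0")
  case False
  then show ?thesis by (rule has_real_derivative_abs_powr_nonzero)
next
  case True
  have "((\<lambda>s::real. \<bar>s\<bar> powr (p - 1)) \<longlongrightarrow> \<bar>0\<bar> powr (p - 1)) (at 0)"
    using assms by (intro tendsto_intros) auto
  then have "((\<lambda>s::real. \<bar>s\<bar> powr (p - 1)) \<longlongrightarrow> 0) (at 0)"
    by simp
  then have "((\<lambda>s. \<bar>(\<bar>s\<bar> powr p - \<bar>0\<bar> powr p) / (s - 0)\<bar>) \<longlongrightarrow> 0) (at 0)"
    by (rule Lim_transform_eventually)
       (auto simp: eventually_at_filter powr_diff abs_divide)
  then have "((\<lambda>s. (\<bar>s\<bar> powr p - \<bar>0\<bar> powr p) / (s - 0)) \<longlongrightarrow> 0) (at 0)"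
    using tendsto_rabs_zero_iff by blast
  then show ?thesis using True by (simp add: has_field_derivative_iff signed_powr_def)
qed

lemma abs_powr_midpoint_less:
  assumes "p > 1" "a \<noteq> (b::real)"
  shows "2 * \<bar>(a + b) / 2\<bar> powr p < \<bar>a\<bar> powr p + \<bar>b\<bar> powr p"
proof -
  have less: "2 * \<bar>(a + b) / 2\<bar> powr p < \<bar>a\<bar> powr p + \<bar>b\<bar> powr p" if "a < b" for a b :: real
  proof -
    define m where "m = (a + b) / 2"
    have am: "a < m" "m < b" using that by (auto simp: m_def)
    note MVT = MVT2[of _ _ "\<lambda>s. \<bar>s\<bar> powr p" "\<lambda>s. p * signed_powr (p - 1) s"]
    obtain s where s: "a < s" "s < m" "\<bar>m\<bar> powr p - \<bar>a\<bar> powr p = (m - a) * (p * signed_powr (p - 1) s)"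
      using MVT[OF am(1)] has_real_derivative_abs_powr[OF assms(1)] by blast
    obtain t where t: "m < t" "t < b" "\<bar>b\<bar> powr p - \<bar>m\<bar> powr p = (b - m) * (p * signed_powr (p - 1) t)"
      using MVT[OF am(2)] has_real_derivative_abs_powr[OF assms(1)] by blast
    have "signed_powr (p - 1) s < signed_powr (p - 1) t"
      using assms(1) s t by (intro signed_powr_strict_mono) auto
    moreover have "b - m = m - a" "m - a > 0" using am by (simp_all add: m_def field_simps)
    ultimately have "\<bar>m\<bar> powr p - \<bar>a\<bar> powr p < \<bar>b\<bar> powr p - \<bar>m\<bar> powr p"
      unfolding s(3) t(3) using assms(1) by (simp add: mult_strict_left_mono)
    then show ?thesis by (simp add: m_def)
  qed
  from assms(2) consider "a < b" | "b < a" by linarith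
  then show ?thesis
  proof cases
    case 2
    then show ?thesis using less[of b a] by (simp only: add.commute)
  qed (rule less)
qed

lemma abs_powr_midpoint_le:
  fixes a b :: real
  assumes "p > 1"
  shows "2 * \<bar>(a + b) / 2\<bar> powr p \<le> \<bar>a\<bar> powr p + \<bar>b\<bar> powr p"
  using abs_powr_midpoint_less[OF assms, of a b] by (cases "a = b") auto

definition sum_abs_powr :: "real \<Rightarrow> real ^ 'n::finite \<Rightarrow> real" where
  "sum_abs_powr p x = (\<Sum>i\<in>UNIV. \<bar>x $ i\<bar> powr p)"

lemma sum_abs_powr_nonneg: "sum_abs_powr p x \<ge> 0"
  unfolding sum_abs_powr_def by (intro sum_nonneg) auto

lemma pnorm_eq_sum_abs_powr: "pnorm p x = sum_abs_powr p x powr (1 / p)"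
  by (simp add: pnorm_def sum_abs_powr_def)

lemma pnorm_le_pnorm_iff:
  assumes "p > 0"
  shows "pnorm p x \<le> pnorm p z \<longleftrightarrow> sum_abs_powr p x \<le> sum_abs_powr p z"
proof -
  have "a \<le> b \<longleftrightarrow> a powr (1 / p) \<le> b powr (1 / p)" if "a \<ge> 0" "b \<ge> 0" for a b :: real
  proof
    assume "a \<le> b"
    then show "a powr (1 / p) \<le> b powr (1 / p)" using assms that by (intro powr_mono2) auto
  next
    assume le: "a powr (1 / p) \<le> b powr (1 / p)"
    show "a \<le> b"
    proof (rule ccontr)
      assume "\<not> a \<le> b"
      then have "b powr (1 / p) < a powr (1 / p)" using assms that by (intro powr_less_mono2) auto
      then show False using le by simp
    qed
  qed
  from this[of "sum_abs_powr p x" "sum_abs_powr p z"] show ?thesis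
    by (simp only: pnorm_eq_sum_abs_powr sum_abs_powr_nonneg simp_thms)
qed

lemma continuous_on_sum_abs_powr:
  "p > 0 \<Longrightarrow> continuous_on S (sum_abs_powr p)"
  unfolding sum_abs_powr_def
  by (intro continuous_on_sum continuous_on_powr' continuous_intros) auto

lemma bounded_sum_abs_powr_sublevel:
  assumes "p > 0"
  shows "bounded {x. sum_abs_powr p x \<le> M}"
  unfolding bounded_iff
proof (intro exI ballI)
  fix x :: "real ^ 'n" assume "x \<in> {x. sum_abs_powr p x \<le> M}"
  then have "\<bar>x $ i\<bar> powr p \<le> M" for i
    using member_le_sum[of i UNIV "\<lambda>i. \<bar>x $ i\<bar> powr p"] by (auto simp: sum_abs_powr_def)
  then have "\<bar>x $ i\<bar> \<le> M powr (1 / p)" for i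
    using assms powr_mono2[of "1 / p" "\<bar>x $ i\<bar> powr p" M] by (simp add: powr_powr)
  then have "(\<Sum>i\<in>UNIV. \<bar>x $ i\<bar>) \<le> (\<Sum>i\<in>(UNIV::'n set). M powr (1 / p))"
    by (intro sum_mono)
  then show "norm x \<le> CARD('n) * M powr (1 / p)"
    using norm_le_l1_cart[of x] by simp
qed

lemma sum_abs_powr_attains_min:
  assumes "p > 0" "closed C" "x0 \<in> C"
  shows "\<exists>x\<in>C. \<forall>z\<in>C. sum_abs_powr p x \<le> sum_abs_powr p z"
proof -
  define K where "K = C \<inter> {z. sum_abs_powr p z \<le> sum_abs_powr p x0}"
  have "compact K"
    unfolding K_def using assms bounded_sum_abs_powr_sublevel
    by (auto simp: compact_eq_bounded_closed intro!: closed_Collect_le continuous_on_sum_abs_powr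
        bounded_Int closed_Int continuous_intros)
  moreover have "x0 \<in> K" using assms by (simp add: K_def)
  ultimately obtain x where "x \<in> K" "\<forall>z\<in>K. sum_abs_powr p x \<le> sum_abs_powr p z"
    using continuous_attains_inf[of K "sum_abs_powr p"] continuous_on_sum_abs_powr[OF assms(1)] by blast
  then show ?thesis unfolding K_def by force
qed

lemma sum_abs_powr_midpoint_less:
  assumes "p > 1" "x \<noteq> y"
  shows "2 * sum_abs_powr p (midpoint x y) < sum_abs_powr p x + sum_abs_powr p y"
proof -
  obtain k where k: "x $ k \<noteq> y $ k" using assms(2) by (auto simp: vec_eq_iff)
  have "2 * sum_abs_powr p (midpoint x y) = (\<Sum>i\<in>UNIV. 2 * \<bar>(x $ i + y $ i) / 2\<bar> powr p)"
    by (simp add: sum_abs_powr_def midpoint_def sum_distrib_left field_simps)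
  also have "\<dots> < (\<Sum>i\<in>UNIV. \<bar>x $ i\<bar> powr p + \<bar>y $ i\<bar> powr p)"
    by (rule sum_strict_mono_ex1)
       (use abs_powr_midpoint_le[OF assms(1)] abs_powr_midpoint_less[OF assms(1) k] in auto)
  finally show ?thesis by (simp add: sum_abs_powr_def sum.distrib)
qed

lemma sum_abs_powr_min_unique:
  assumes "p > 1" "convex C" "x \<in> C" "y \<in> C"
    and "\<forall>z\<in>C. sum_abs_powr p x \<le> sum_abs_powr p z" "\<forall>z\<in>C. sum_abs_powr p y \<le> sum_abs_powr p z"
  shows "x = y"
proof (rule ccontr)
  assume "x \<noteq> y"
  have "midpoint x y \<in> C"
    using convexD[OF assms(2-4), of "1/2" "1/2"] by (simp add: midpoint_def scaleR_add_right)
  then show False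
    using sum_abs_powr_midpoint_less[OF assms(1) \<open>x \<noteq> y\<close>] assms(5,6) by fastforce
qed

lemma sum_abs_powr_stationary:
  assumes "p > 1" and min: "\<And>t. sum_abs_powr p x \<le> sum_abs_powr p (x + t *\<^sub>R v)"
  shows "(\<chi> i. signed_powr (p - 1) (x $ i)) \<bullet> v = 0"
proof -
  define g where "g t = (\<Sum>i\<in>UNIV. \<bar>x $ i + t * v $ i\<bar> powr p)" for t
  have "(g has_real_derivative (\<Sum>i\<in>UNIV. p * signed_powr (p - 1) (x $ i + 0 * v $ i) * (0 + 1 * v $ i))) (at 0)"
    unfolding g_def
    by (intro DERIV_sum, rule DERIV_chain2[OF has_real_derivative_abs_powr[OF assms(1)]])
       (auto intro!: derivative_eq_intros)
  then have "(g has_real_derivative p * ((\<chi> i. signed_powr (p - 1) (x $ i)) \<bullet> v)) (at 0)"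
    by (simp add: inner_vec_def sum_distrib_left mult.assoc)
  moreover have "g 0 \<le> g t" for t using min[of t] by (simp add: g_def sum_abs_powr_def)
  ultimately have "p * ((\<chi> i. signed_powr (p - 1) (x $ i)) \<bullet> v) = 0"
    by (intro DERIV_local_min[of g _ 0 1]) auto
  then show ?thesis using assms(1) by simp
qed

lemma differentiable_signed_powr: "t \<noteq> 0 \<Longrightarrow> signed_powr r differentiable (at t)"
  using has_real_derivative_signed_powr real_differentiable_def by blast

definition signed_powr_combination :: "real \<Rightarrow> ('n::finite \<Rightarrow> 'a::real_inner) \<Rightarrow> 'a \<Rightarrow> 'a" where
  "signed_powr_combination r a l = (\<Sum>j\<in>UNIV. signed_powr r (a j \<bullet> l) *\<^sub>R a j)"

lemma negligible_image_signed_powr_combination: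
  fixes a :: "'n::finite \<Rightarrow> 'a::euclidean_space"
  assumes "\<And>j. a j \<noteq> 0"
  shows "negligible (signed_powr_combination r a ` {l. \<exists>j. a j \<bullet> l = 0})"
proof -
  define S where "S Z = {l. \<forall>j. a j \<bullet> l = 0 \<longleftrightarrow> j \<in> Z}" for Z
  \<comment> \<open>On \<open>S Z\<close> the terms indexed by \<open>Z\<close> vanish; dropping them leaves a map that is differentiable
    on \<open>S Z\<close>, whereas \<open>signed_powr r\<close> need not be differentiable at \<open>0\<close>.\<close>
  define G where "G Z l = (\<Sum>j\<in>-Z. signed_powr r (a j \<bullet> l) *\<^sub>R a j)" for Z l
  have neg: "negligible (G Z ` S Z)" if "j \<in> Z" for j Z
  proof (rule negligible_differentiable_image_negligible[OF order_refl])
    have "S Z \<subseteq> {l. a j \<bullet> l = 0}" using that by (auto simp: S_def)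
    then show "negligible (S Z)"
      using assms by (intro negligible_subset[OF negligible_hyperplane]) auto
    show "G Z differentiable_on S Z"
      unfolding differentiable_on_def
    proof
      fix l assume "l \<in> S Z"
      have "(\<lambda>l. signed_powr r (a k \<bullet> l)) differentiable at l within S Z" if "k \<in> -Z" for k
        by (rule differentiable_compose[of "signed_powr r" "\<lambda>l. a k \<bullet> l"])
          (use that \<open>l \<in> S Z\<close> differentiable_signed_powr in \<open>auto simp: S_def\<close>)
      then show "G Z differentiable at l within S Z"
        unfolding G_def by (intro differentiable_sum ballI differentiable_scaleR) auto
    qed
  qed
  have "signed_powr_combination r a ` {l. \<exists>j. a j \<bullet> l = 0}
      \<subseteq> (\<Union>Z\<in>{Z. Z \<noteq> {}}. G Z ` S Z)"
  proof clarify
    fix l j assume "a j \<bullet> l = 0"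
    define Z where "Z = {j. a j \<bullet> l = 0}"
    have "signed_powr_combination r a l = G Z l"
      unfolding G_def signed_powr_combination_def by (rule sum.mono_neutral_right) (auto simp: Z_def)
    moreover have "l \<in> S Z" "Z \<noteq> {}" using \<open>a j \<bullet> l = 0\<close> by (auto simp: S_def Z_def)
    ultimately show "signed_powr_combination r a l \<in> (\<Union>Z\<in>{Z. Z \<noteq> {}}. G Z ` S Z)"
      by blast
  qed
  moreover have "negligible (\<Union>Z\<in>{Z. Z \<noteq> {}}. G Z ` S Z)"
    using neg by (intro negligible_Union) auto
  ultimately show ?thesis
    using negligible_subset by blast
qed

lemma orthogonal_null_space_imp_row_space:
  fixes A :: "real ^ 'n::finite ^ 'm::finite" and R :: "real ^ 'm ^ 'n"
  assumes "A ** R = mat 1" and "\<And>v. A *v v = 0 \<Longrightarrow> w \<bullet> v = 0"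
  shows "w $ j = column j A \<bullet> (w v* R)"
proof -
  define v where "v = axis j 1 - R *v column j A"
  have "A *v v = 0"
    by (simp add: v_def matrix_vector_mult_diff_distrib matrix_vector_mult_basis
        matrix_vector_mul_assoc assms(1))
  then have "w \<bullet> (axis j 1 - R *v column j A) = 0"
    using assms(2) by (simp add: v_def)
  then have "w \<bullet> axis j 1 = w \<bullet> (R *v column j A)"
    by (simp add: inner_diff_right)
  also have "\<dots> = column j A \<bullet> (w v* R)"
    by (metis dot_lmul_matrix inner_commute)
  finally show ?thesis by (simp add: inner_axis)
qed

lemma right_inverse_if_invertible_submatrix:
  fixes A :: "real ^ 'n::finite ^ 'm::finite" and f :: "'m \<Rightarrow> 'n"
  assumes "inj f" and "invertible (\<chi> i k. A $ i $ f k)"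
  shows "\<exists>R. A ** R = mat 1"
proof -
  obtain B' :: "real ^ 'm ^ 'm" where B': "(\<chi> i k. A $ i $ f k) ** B' = mat 1"
    using assms(2) unfolding invertible_def by blast
  define P :: "real ^ 'm ^ 'n" where "P = (\<chi> i k. if i = f k then 1 else 0)"
  have "A ** P = (\<chi> i k. A $ i $ f k)"
    by (simp add: matrix_matrix_mult_def P_def vec_eq_iff if_distrib[of "\<lambda>x. _ * x"] cong: if_cong)
  then have "A ** (P ** B') = mat 1" by (simp add: matrix_mul_assoc B')
  then show ?thesis by blast
qed

lemma column_nonzero_if_invertible_submatrices:
  fixes A :: "real ^ 'n::finite ^ 'm::finite"
  assumes "\<forall>f :: 'm \<Rightarrow> 'n. inj f \<longrightarrow> invertible (\<chi> i k. A $ i $ f k)" and "inj (f0 :: 'm \<Rightarrow> 'n)"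
  shows "column j A \<noteq> 0"
proof
  assume col: "column j A = 0"
  fix k0 :: 'm
  \<comment> \<open>An injection hitting \<open>j\<close>, obtained from \<open>f0\<close> by a transposition.\<close>
  define f where "f k = (if k = k0 then j else if f0 k = j then f0 k0 else f0 k)" for k
  have "inj f"
    using assms(2) unfolding inj_def f_def by auto
  then have "inj ((*v) (\<chi> i k. A $ i $ f k))"
    using assms(1) inj_matrix_vector_mult by blast
  moreover have "(\<chi> i k. A $ i $ f k) *v axis k0 1 = (\<chi> i k. A $ i $ f k) *v 0"
    using col by (simp add: matrix_vector_mult_basis column_def f_def vec_eq_iff)
  ultimately have "axis k0 (1::real) = 0" by (rule injD)
  then show False by (simp add: axis_eq_0_iff)
qed

lemma AE_lborel_notin_negligible:
  fixes N :: "'a::euclidean_space set"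
  assumes "negligible N"
  shows "AE y in lborel. y \<notin> N"
proof -
  have "AE y in lebesgue. y \<notin> N"
    using assms by (intro AE_I'[of N]) (auto simp: negligible_iff_null_sets)
  then show ?thesis by (simp add: AE_completion_iff)
qed

lemma pnorm_min_iff_sum_abs_powr_min:
  assumes "p > 0"
  shows "pnorm_min p A y x \<longleftrightarrow>
    x \<in> {z. A *v z = y} \<and> (\<forall>z\<in>{z. A *v z = y}. sum_abs_powr p x \<le> sum_abs_powr p z)"
  using pnorm_le_pnorm_iff[OF assms] by (auto simp: pnorm_min_def)

lemma ex1_pnorm_min:
  fixes A :: "real ^ 'n::finite ^ 'm::finite"
  assumes "p > 1" and "A *v x0 = y"
  shows "\<exists>!x. pnorm_min p A y x"
proof -
  let ?C = "{z. A *v z = y}"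
  have "closed ?C"
    by (intro closed_Collect_eq continuous_intros)
  moreover have "convex ?C"
    using convex_linear_vimage[OF matrix_vector_mul_linear convex_singleton, of A y] by (simp add: vimage_def)
  ultimately show ?thesis
    using assms sum_abs_powr_attains_min[of p ?C x0] sum_abs_powr_min_unique[of p ?C]
    by (simp add: pnorm_min_iff_sum_abs_powr_min) blast
qed

lemma pnorm_min_lagrange_multiplier:
  fixes A :: "real ^ 'n::finite ^ 'm::finite"
  assumes "p > 1" and "A ** R = mat 1" and "pnorm_min p A y x"
  shows "\<exists>l. \<forall>j. x $ j = signed_powr (1 / (p - 1)) (column j A \<bullet> l)"
proof -
  define w where "w = (\<chi> i. signed_powr (p - 1) (x $ i))"
  have "w \<bullet> v = 0" if "A *v v = 0" for v
    unfolding w_def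
  proof (rule sum_abs_powr_stationary[OF assms(1)])
    fix t
    have "A *v (x + t *\<^sub>R v) = y"
      using assms(3) that by (simp add: pnorm_min_def matrix_vector_right_distrib matrix_vector_mult_scaleR)
    then show "sum_abs_powr p x \<le> sum_abs_powr p (x + t *\<^sub>R v)"
      using assms(1,3) by (simp add: pnorm_min_iff_sum_abs_powr_min)
  qed
  then have "w $ j = column j A \<bullet> (w v* R)" for j
    by (rule orthogonal_null_space_imp_row_space[OF assms(2)])
  moreover have "x $ j = signed_powr (1 / (p - 1)) (w $ j)" for j
    unfolding w_def vec_lambda_beta by (rule signed_powr_inverse[symmetric]) (use assms(1) in simp)
  ultimately show ?thesis by metis
qed

lemma pnorm_min_full_support:
  fixes A :: "real ^ 'n::finite ^ 'm::finite"
  assumes "p > 1" and "A ** R = mat 1" and "pnorm_min p A y x"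
    and "y \<notin> signed_powr_combination (1 / (p - 1)) (\<lambda>j. column j A) ` {l. \<exists>j. column j A \<bullet> l = 0}"
  shows "supp x = UNIV"
proof -
  obtain l where l: "\<And>j. x $ j = signed_powr (1 / (p - 1)) (column j A \<bullet> l)"
    using pnorm_min_lagrange_multiplier[OF assms(1-3)] by blast
  have "y = (\<Sum>j\<in>UNIV. x $ j *\<^sub>R column j A)"
    using assms(3) by (simp add: pnorm_min_def matrix_mult_sum scalar_mult_eq_scaleR)
  then have "column j A \<bullet> l \<noteq> 0" for j
    using assms(4) by (auto simp: l signed_powr_combination_def)
  then show ?thesis using l by (auto simp: supp_def)
qed

theorem corollary4p1:
  fixes p :: real and A :: "real ^ 'n ^ 'm"
  assumes "p > 1"
    and "CARD('n) \<ge> 2 * CARD('m) - 1"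
    and "\<forall>f :: 'm \<Rightarrow> 'n. inj f \<longrightarrow> invertible (\<chi> i j. A $ i $ f j)"
  shows "AE y in lborel. \<exists>x. pnorm_min p A y x \<and> (\<forall>z. pnorm_min p A y z \<longrightarrow> z = x)
                              \<and> card (supp x) = CARD('n)"
proof -
  have "CARD('m) \<le> CARD('n)" using assms(2) by (simp add: le_diff_conv2)
  then obtain f0 :: "'m \<Rightarrow> 'n" where "inj f0"
    using card_le_inj[of "UNIV :: 'm set" "UNIV :: 'n set"] by auto
  then obtain R where R: "A ** R = mat 1"
    using assms(3) right_inverse_if_invertible_submatrix by blast
  define N where "N = signed_powr_combination (1 / (p - 1)) (\<lambda>j. column j A) ` {l. \<exists>j. column j A \<bullet> l = 0}"
  have "AE y in lborel. y \<notin> N"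
    using column_nonzero_if_invertible_submatrices[OF assms(3) \<open>inj f0\<close>] unfolding N_def
    by (intro AE_lborel_notin_negligible negligible_image_signed_powr_combination)
  then show ?thesis
  proof (rule eventually_mono)
    fix y assume generic: "y \<notin> N"
    have "A *v (R *v y) = y" by (simp add: matrix_vector_mul_assoc R)
    then have "\<exists>!x. pnorm_min p A y x" by (rule ex1_pnorm_min[OF assms(1)])
    then obtain x where x: "pnorm_min p A y x" and uniq: "\<forall>z. pnorm_min p A y z \<longrightarrow> z = x"
      by (rule ex1E)
    have "supp x = UNIV"
      using pnorm_min_full_support[OF assms(1) R x generic[unfolded N_def]] .
    then show "\<exists>x. pnorm_min p A y x \<and> (\<forall>z. pnorm_min p A y z \<longrightarrow> z = x) \<and> card (supp x) = CARD('n)"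
      by (intro exI[of _ x] conjI x uniq) simp
  qed
qed

end
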